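(* In the setting of the controlled system $\dot g=T_eR_g(\xi)$, $\dot\xi+\sharp[\mathrm{ad}^*_\xi\flat(\xi)]=\sum_a u^af_a$ with $\mathfrak{g}=\mathfrak{d}\oplus\mathfrak{f}$, let $u^*$ be the unique control law making $\mathfrak{d}$ a virtual nonholonomic constraint. Then every solution $\xi(t)$ of the closed-loop system with $\xi(0)\in\mathfrak{d}$ satisfies $$\dot\xi+\nabla^{\mathfrak{c}}_\xi\xi=0,$$ where $\nabla^{\mathfrak{c}}$ is the induced constrained connection; and $\mathfrak{d}$ is geodesically invariant for $\nabla^{\mathfrak{c}}$, i.e. solutions of $\dot\xi+\nabla^{\mathfrak{c}}_\xi\xi=0$ with $\xi(0)\in\mathfrak{d}$ remain in $\mathfrak{d}$.
   Context: $G$ is an $n$-dimensional Lie group with Lie algebra $\mathfrak{g}=T_eG$, an inner product $\langle\cdot,\cdot\rangle$ on $\mathfrak{g}$ inducing a right-invariant metric on $G$ with Levi-Civita connection $\nabla$; $R_g(h)=hg$, $\xi_R(g)=T_eR_g\xi$. $\flat(\xi)(\eta)=\langle\xi,\eta\rangle$, $\sharp=\flat^{-1}$, $\mathrm{ad}^*_\xi$ dual of $\mathrm{ad}_\xi=[\xi,\cdot]$. $f_1,\dots,f_m\in\mathfrak{g}$ are linearly independent spanning $\mathfrak{f}$, $\mathfrak{d}$ is a subspace with $\mathfrak{g}=\mathfrak{d}\oplus\mathfrak{f}$, with projections $\mathfrak{p}:\mathfrak{g}\to\mathfrak{d}$, $\mathfrak{q}:\mathfrak{g}\to\mathfrak{f}$.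 The control law $u^*(\xi)=(\tau^1(\xi),\dots,\tau^m(\xi))$ is defined by $\sharp[\mathrm{ad}^*_\xi\flat(\xi)]=\eta(\xi)+\sum_b\tau^b(\xi)f_b$ with $\eta(\xi)\in\mathfrak{d}$. The Riemannian $\mathfrak{g}$-connection is $\nabla^{\mathfrak{g}}_\xi\eta:=(\nabla_{\xi_R}\eta_R)(e)$, and the induced constrained connection is $\nabla^{\mathfrak{c}}_\xi\eta:=\nabla^{\mathfrak{g}}_\xi\eta+\nabla^{\mathfrak{g}}_\xi(\mathfrak{q}(\eta))-\mathfrak{q}(\nabla^{\mathfrak{g}}_\xi\eta)$. *)

theory Defs
  imports "HOL-Analysis.Analysis"
begin

text \<open>The Lie algebra g is modelled as a finite-dimensional real inner product space
  (type class euclidean_space, whose inner product is the given inner product on g)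
  together with a Lie bracket br.\<close>

definition lie_bracket :: "('a::real_vector \<Rightarrow> 'a \<Rightarrow> 'a) \<Rightarrow> bool" where
  "lie_bracket br \<longleftrightarrow> bilinear br \<and> (\<forall>x y. br x y = - br y x) \<and>
     (\<forall>x y z. br x (br y z) + br y (br z x) + br z (br x y) = 0)"

definition flat :: "'a::real_inner \<Rightarrow> ('a \<Rightarrow> real)" where
  "flat \<xi> = (\<lambda>\<eta>. inner \<xi> \<eta>)"

definition sharp :: "('a::real_inner \<Rightarrow> real) \<Rightarrow> 'a" where
  "sharp \<alpha> = (THE v. flat v = \<alpha>)"

definition ad_star :: "('a \<Rightarrow> 'a \<Rightarrow> 'a) \<Rightarrow> 'a \<Rightarrow> ('a \<Rightarrow> real) \<Rightarrow> ('a \<Rightarrow> real)" where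
  "ad_star br \<xi> \<alpha> = (\<lambda>\<eta>. \<alpha> (br \<xi> \<eta>))"

text \<open>Riemannian g-connection: nabla^g_xi eta = (nabla_{xi_R} eta_R)(e) for the
  Levi-Civita connection of the right-invariant metric.  Restricted to right-invariant
  fields, the Levi-Civita conditions read: torsion-free
  nabla_xi eta - nabla_eta xi = [xi_R, eta_R](e) = -[xi,eta], and metric compatibility
  <nabla_xi eta, zeta> + <eta, nabla_xi zeta> = 0 (inner products of right-invariant
  fields are constant).  These determine the connection uniquely (Koszul).\<close>
definition nabla_g :: "('a::real_inner \<Rightarrow> 'a \<Rightarrow> 'a) \<Rightarrow> 'a \<Rightarrow> 'a \<Rightarrow> 'a" where
  "nabla_g br = (THE N. (\<forall>\<xi> \<eta>. N \<xi> \<eta> - N \<eta> \<xi> = - br \<xi> \<eta>) \<and>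
                        (\<forall>\<xi> \<eta> \<zeta>. inner (N \<xi> \<eta>) \<zeta> + inner \<eta> (N \<xi> \<zeta>) = 0))"

definition proj_along :: "'a::real_vector set \<Rightarrow> 'a set \<Rightarrow> 'a \<Rightarrow> 'a" where
  "proj_along D F x = (THE y. y \<in> F \<and> x - y \<in> D)"

definition nabla_c :: "('a::real_inner \<Rightarrow> 'a \<Rightarrow> 'a) \<Rightarrow> 'a set \<Rightarrow> 'a set \<Rightarrow> 'a \<Rightarrow> 'a \<Rightarrow> 'a" where
  "nabla_c br D F \<xi> \<eta> = nabla_g br \<xi> \<eta> + nabla_g br \<xi> (proj_along D F \<eta>)
                          - proj_along D F (nabla_g br \<xi> \<eta>)"

end

theory Submission
  imports Defs
begin

text \<open>Both statements concern the F-component \<open>z = q \<xi>\<close> of a solution, where \<open>q\<close> projects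
  onto F along D. The Koszul formula gives \<open>\<nabla>\<^sup>g\<^sub>\<xi> \<xi> = \<sharp>(ad\<^sup>*\<^sub>\<xi> \<flat>\<xi>)\<close>, whose F-part is exactly
  what the control law cancels. Along the closed loop therefore \<open>z' = 0\<close>, so \<open>\<xi>\<close> stays in D,
  where \<open>\<nabla>\<^sup>c\<^sub>\<xi> \<xi>\<close> reduces to \<open>\<nabla>\<^sup>g\<^sub>\<xi> \<xi> - q (\<nabla>\<^sup>g\<^sub>\<xi> \<xi>)\<close>, the closed-loop vector field.
  Along a solution of \<open>\<xi>' + \<nabla>\<^sup>c\<^sub>\<xi> \<xi> = 0\<close> one gets \<open>z' = - q (\<nabla>\<^sup>g\<^sub>\<xi> z)\<close>, which is linear
  in \<open>z\<close> with coefficients bounded on compact time intervals, so \<open>z(0) = 0\<close> forces \<open>z = 0\<close>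
  by a Gronwall estimate on \<open>|z|\<^sup>2\<close>.\<close>

locale complementary_subspaces =
  fixes D F :: "'a::real_vector set"
  assumes subspace_D: "subspace D" and subspace_F: "subspace F"
    and inter_eq_0: "D \<inter> F = {0}"
    and sums_eq_UNIV: "{x + y | x y. x \<in> D \<and> y \<in> F} = UNIV"
begin

abbreviation proj :: "'a \<Rightarrow> 'a" where
  "proj \<equiv> proj_along D F"

lemma proj_along_eqI:
  assumes "y \<in> F" "x - y \<in> D"
  shows "proj x = y"
  unfolding proj_along_def
proof (rule the_equality)
  fix y' assume y': "y' \<in> F \<and> x - y' \<in> D"
  have "y' - y \<in> F"
    using assms(1) y' subspace_F by (simp add: subspace_diff)
  moreover have "(x - y) - (x - y') \<in> D"
    by (rule subspace_diff[OF subspace_D]) (use assms(2) y' in auto)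
  moreover have "(x - y) - (x - y') = y' - y"
    by simp
  ultimately have "y' - y \<in> D \<inter> F"
    by (metis IntI)
  then show "y' = y"
    using inter_eq_0 by simp
qed (use assms in simp)

lemma proj_along_in: "proj x \<in> F" and diff_proj_along_in: "x - proj x \<in> D"
proof -
  have "x \<in> {x + y | x y. x \<in> D \<and> y \<in> F}"
    using sums_eq_UNIV by simp
  then obtain d y where "x = d + y" "d \<in> D" "y \<in> F"
    by blast
  then have "proj x = y"
    by (intro proj_along_eqI) auto
  with \<open>x = d + y\<close> \<open>d \<in> D\<close> \<open>y \<in> F\<close> show "proj x \<in> F" "x - proj x \<in> D"
    by auto
qed

lemma proj_along_eq_self: "y \<in> F \<Longrightarrow> proj y = y"
  by (rule proj_along_eqI) (auto simp: subspace_0[OF subspace_D])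

lemma proj_along_eq_0_iff: "proj x = 0 \<longleftrightarrow> x \<in> D"
  using diff_proj_along_in[of x] proj_along_eqI[of 0 x] subspace_0[OF subspace_F] by auto

lemma linear_proj_along: "linear proj"
proof (rule linearI)
  fix x y :: 'a and r :: real
  show "proj (x + y) = proj x + proj y"
  proof (rule proj_along_eqI)
    show "proj x + proj y \<in> F"
      by (simp add: proj_along_in subspace_F subspace_add)
    have "(x - proj x) + (y - proj y) \<in> D"
      by (simp add: diff_proj_along_in subspace_D subspace_add)
    then show "x + y - (proj x + proj y) \<in> D"
      by (simp add: algebra_simps)
  qed
  show "proj (r *\<^sub>R x) = r *\<^sub>R proj x"
  proof (rule proj_along_eqI)
    show "r *\<^sub>R proj x \<in> F"
      by (simp add: proj_along_in subspace_F subspace_scale)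
    have "r *\<^sub>R (x - proj x) \<in> D"
      by (simp add: diff_proj_along_in subspace_D subspace_scale)
    then show "r *\<^sub>R x - r *\<^sub>R proj x \<in> D"
      by (simp add: algebra_simps)
  qed
qed

sublocale proj: linear proj
  by (rule linear_proj_along)

end

lemma exp_weighted_antimono:
  fixes g g' :: "real \<Rightarrow> real"
  assumes "a \<le> b"
    and der: "\<And>s. s \<in> {a..b} \<Longrightarrow> (g has_real_derivative g' s) (at s within {a..b})"
    and le: "\<And>s. s \<in> {a..b} \<Longrightarrow> g' s \<le> k * g s"
  shows "exp (- k * b) * g b \<le> exp (- k * a) * g a"
proof -
  let ?h = "\<lambda>s. exp (- k * s) * g s" and ?h' = "\<lambda>s. exp (- k * s) * (g' s - k * g s)"
  have "(?h has_real_derivative ?h' s) (at s within {a..b})" if "s \<in> {a..b}" for s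
    using der[OF that] by (auto intro!: derivative_eq_intros simp: algebra_simps)
  then obtain x where x: "x \<in> {a..b}" and mvt: "?h b - ?h a = ?h' x * (b - a)"
    using mvt_very_simple[OF \<open>a \<le> b\<close>, of ?h "\<lambda>s. (*) (?h' s)"]
    by (auto simp: has_field_derivative_def)
  have "?h' x * (b - a) \<le> 0"
    using le[OF x] \<open>a \<le> b\<close> by (intro mult_nonpos_nonneg mult_nonneg_nonpos) auto
  with mvt show ?thesis
    by linarith
qed

lemma linear_growth_vanish_iff:
  fixes z z' :: "real \<Rightarrow> 'a::real_inner"
  assumes "a \<le> b"
    and der: "\<And>s. s \<in> {a..b} \<Longrightarrow> (z has_vector_derivative z' s) (at s within {a..b})"
    and bound: "\<And>s. s \<in> {a..b} \<Longrightarrow> norm (z' s) \<le> c * norm (z s)"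
  shows "z a = 0 \<longleftrightarrow> z b = 0"
proof -
  define g where "g s = z s \<bullet> z s" for s
  have g_der: "(g has_real_derivative 2 * (z s \<bullet> z' s)) (at s within {a..b})" if "s \<in> {a..b}" for s
  proof -
    have "(g has_derivative (\<lambda>h. z s \<bullet> (h *\<^sub>R z' s) + (h *\<^sub>R z' s) \<bullet> z s)) (at s within {a..b})"
      unfolding g_def using der[OF that]
      by (intro has_derivative_inner) (simp_all add: has_vector_derivative_def)
    moreover have "(\<lambda>h. z s \<bullet> (h *\<^sub>R z' s) + (h *\<^sub>R z' s) \<bullet> z s) = (*) (2 * (z s \<bullet> z' s))"
      by (auto simp: inner_commute algebra_simps)
    ultimately show ?thesis
      by (simp add: has_field_derivative_def)
  qed
  have g_der_bound: "\<bar>2 * (z s \<bullet> z' s)\<bar> \<le> 2 * c * g s" if "s \<in> {a..b}" for s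
  proof -
    have "\<bar>z s \<bullet> z' s\<bar> \<le> norm (z s) * norm (z' s)"
      by (rule Cauchy_Schwarz_ineq2)
    also have "\<dots> \<le> norm (z s) * (c * norm (z s))"
      using bound[OF that] by (simp add: mult_left_mono)
    also have "\<dots> = c * g s"
      by (simp add: g_def flip: power2_norm_eq_inner power2_eq_square)
    finally show ?thesis
      by (simp add: abs_mult)
  qed
  have decay: "exp (- (2 * c) * b) * g b \<le> exp (- (2 * c) * a) * g a"
    using g_der g_der_bound by (intro exp_weighted_antimono[OF \<open>a \<le> b\<close>]) (auto simp: abs_le_iff)
  have growth: "exp (- (- 2 * c) * b) * - g b \<le> exp (- (- 2 * c) * a) * - g a"
  proof (rule exp_weighted_antimono[OF \<open>a \<le> b\<close>])
    show "((\<lambda>s. - g s) has_real_derivative - (2 * (z s \<bullet> z' s))) (at s within {a..b})"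
      if "s \<in> {a..b}" for s
      using g_der[OF that] by (rule DERIV_minus)
    show "- (2 * (z s \<bullet> z' s)) \<le> - 2 * c * - g s" if "s \<in> {a..b}" for s
      using g_der_bound[OF that] by (simp add: abs_le_iff)
  qed
  have "g b \<le> 0" if "g a = 0"
    using decay that by (simp add: mult_le_0_iff)
  moreover have "g a \<le> 0" if "g b = 0"
    using growth that by (simp add: mult_le_0_iff)
  moreover have "g s \<ge> 0" "g s = 0 \<longleftrightarrow> z s = 0" for s
    by (simp_all add: g_def)
  ultimately show ?thesis
    by (metis order_antisym)
qed

lemma linear_growth_vanish_on_interval:
  fixes z z' :: "real \<Rightarrow> 'a::real_inner"
  assumes I: "is_interval I" "t\<^sub>0 \<in> I" "t \<in> I" and "z t\<^sub>0 = 0"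
    and der: "\<And>s. s \<in> I \<Longrightarrow> (z has_vector_derivative z' s) (at s within I)"
    and bound: "\<And>s. s \<in> closed_segment t\<^sub>0 t \<Longrightarrow> norm (z' s) \<le> c * norm (z s)"
  shows "z t = 0"
proof -
  have "closed_segment t\<^sub>0 t \<subseteq> I"
    using I by (simp add: closed_segment_subset is_interval_convex)
  then have "(z has_vector_derivative z' s) (at s within closed_segment t\<^sub>0 t)"
    if "s \<in> closed_segment t\<^sub>0 t" for s
    using der that by (meson has_vector_derivative_within_subset subsetD)
  then show ?thesis
    using linear_growth_vanish_iff[of t\<^sub>0 t z z' c] linear_growth_vanish_iff[of t t\<^sub>0 z z' c]
      bound \<open>z t\<^sub>0 = 0\<close>
    by (cases "t\<^sub>0 \<le> t") (auto simp: closed_segment_eq_real_ivl closed_segment_commute)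
qed

lemma bilinear_ode_vanish_on_interval:
  fixes h :: "'b::euclidean_space \<Rightarrow> 'a::euclidean_space \<Rightarrow> 'a"
  assumes "bilinear h" and I: "is_interval I" "t\<^sub>0 \<in> I" "t \<in> I" and "z t\<^sub>0 = 0"
    and "continuous_on I x"
    and der: "\<And>s. s \<in> I \<Longrightarrow> (z has_vector_derivative h (x s) (z s)) (at s within I)"
  shows "z t = 0"
proof -
  obtain K where "K > 0" and K: "\<And>u v. norm (h u v) \<le> K * norm u * norm v"
    using bilinear_bounded_pos[OF \<open>bilinear h\<close>] by blast
  have "closed_segment t\<^sub>0 t \<subseteq> I"
    using I by (simp add: closed_segment_subset is_interval_convex)
  then have "compact (x ` closed_segment t\<^sub>0 t)"
    using \<open>continuous_on I x\<close> by (intro compact_continuous_image) (auto intro: continuous_on_subset)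
  then obtain B where B: "\<And>s. s \<in> closed_segment t\<^sub>0 t \<Longrightarrow> norm (x s) \<le> B"
    by (meson bounded_iff compact_imp_bounded imageI)
  show ?thesis
  proof (rule linear_growth_vanish_on_interval[OF I \<open>z t\<^sub>0 = 0\<close> der])
    fix s assume "s \<in> closed_segment t\<^sub>0 t"
    have "norm (h (x s) (z s)) \<le> K * norm (x s) * norm (z s)"
      by (rule K)
    also have "\<dots> \<le> K * B * norm (z s)"
      using B[OF \<open>s \<in> closed_segment t\<^sub>0 t\<close>] \<open>K > 0\<close> by (intro mult_right_mono) auto
    finally show "norm (h (x s) (z s)) \<le> K * B * norm (z s)" .
  qed
qed

lemma lie_bracket_self:
  assumes "lie_bracket br"
  shows "br x x = 0"
proof -
  have "br x x = - br x x"
    using assms unfolding lie_bracket_def by blast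
  then have "(2::real) *\<^sub>R br x x = 0"
    by (metis add.right_inverse scaleR_2)
  then show ?thesis
    by simp
qed

lemma sharp_flat: "sharp (flat v) = v"
  unfolding sharp_def
proof (rule the_equality)
  fix w assume "flat w = flat v"
  then have "(w - v) \<bullet> (w - v) = 0"
    by (metis flat_def inner_diff_left right_minus_eq)
  then show "w = v"
    by simp
qed simp

lemma sharp_ad_star_flat:
  fixes br :: "'a::euclidean_space \<Rightarrow> 'a \<Rightarrow> 'a"
  assumes "bilinear br"
  shows "sharp (ad_star br x (flat x)) = adjoint (br x) x"
proof -
  have "ad_star br x (flat x) = flat (adjoint (br x) x)"
    using assms by (auto simp: ad_star_def flat_def adjoint_clauses bilinear_def)
  then show ?thesis
    by (simp add: sharp_flat)
qed

lemma bilinear_adjoint_apply: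
  fixes br :: "'a::euclidean_space \<Rightarrow> 'b::euclidean_space \<Rightarrow> 'c::euclidean_space"
  assumes "bilinear br"
  shows "bilinear (\<lambda>x. adjoint (br x))"
proof -
  have lin: "linear (br x)" for x
    using assms by (simp add: bilinear_def)
  show ?thesis
    unfolding bilinear_def
    by (auto simp: adjoint_linear lin euclidean_eq_iff[where 'a='b] adjoint_clauses inner_add
        bilinear_ladd[OF assms] bilinear_lmul[OF assms] intro!: linearI)
qed

lemma bilinear_compose_linear:
  assumes "linear f" "bilinear h"
  shows "bilinear (\<lambda>x y. f (h x y))"
  using assms linear_compose[of "\<lambda>y. h _ y" f] linear_compose[of "\<lambda>x. h x _" f]
  by (simp add: bilinear_def o_def)

text \<open>The Koszul formula for the Levi-Civita connection on right-invariant fields, with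
  \<open>adjoint (br x)\<close> the metric transpose of \<open>ad\<^sub>x\<close>.\<close>

definition koszul_connection :: "('a::euclidean_space \<Rightarrow> 'a \<Rightarrow> 'a) \<Rightarrow> 'a \<Rightarrow> 'a \<Rightarrow> 'a" where
  "koszul_connection br x y = (1/2) *\<^sub>R (adjoint (br x) y + adjoint (br y) x - br x y)"

lemma inner_koszul_connection:
  assumes "bilinear br"
  shows "koszul_connection br x y \<bullet> z = (y \<bullet> br x z + x \<bullet> br y z - br x y \<bullet> z) / 2"
  using assms
  by (simp add: koszul_connection_def adjoint_clauses bilinear_def inner_diff_left inner_add_left)

lemma bilinear_koszul_connection:
  assumes "bilinear br"
  shows "bilinear (koszul_connection br)"
proof -
  note adj = bilinear_adjoint_apply[OF assms]
  show ?thesis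
    unfolding bilinear_def koszul_connection_def
    by (auto intro!: linearI simp: algebra_simps
        bilinear_ladd[OF adj] bilinear_radd[OF adj] bilinear_lmul[OF adj] bilinear_rmul[OF adj]
        bilinear_ladd[OF assms] bilinear_radd[OF assms] bilinear_lmul[OF assms] bilinear_rmul[OF assms])
qed

lemma sym_skew_eq_0:
  fixes T :: "'a \<Rightarrow> 'a \<Rightarrow> 'a \<Rightarrow> real"
  assumes sym: "\<And>a b c. T a b c = T b a c" and skew: "\<And>a b c. T a b c = - T a c b"
  shows "T a b c = 0"
proof -
  have "T a b c = - T a c b" by (rule skew)
  also have "\<dots> = - T c a b" by (simp add: sym[of a c])
  also have "\<dots> = T c b a" by (simp add: skew[of c a b])
  also have "\<dots> = T b c a" by (rule sym)
  also have "\<dots> = - T b a c" by (rule skew)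
  also have "\<dots> = - T a b c" by (simp add: sym[of b a])
  finally show ?thesis
    by simp
qed

lemma nabla_g_eq_koszul_connection:
  assumes lie: "lie_bracket br"
  shows "nabla_g br = koszul_connection br"
proof -
  have bl: "bilinear br" and anti: "\<And>x y. br x y = - br y x"
    using lie unfolding lie_bracket_def by blast+
  have torsion: "koszul_connection br x y - koszul_connection br y x = - br x y" for x y
    using anti[of y x] by (simp add: koszul_connection_def algebra_simps flip: scaleR_2)
  have metric: "koszul_connection br x y \<bullet> z + y \<bullet> koszul_connection br x z = 0" for x y z
    using anti[of z y]
    by (simp add: inner_koszul_connection[OF bl] inner_commute[of y] inner_commute[of z] field_simps)
  show ?thesis
    unfolding nabla_g_def
  proof (rule the_equality)
    fix N assume N: "(\<forall>x y. N x y - N y x = - br x y) \<and> (\<forall>x y z. N x y \<bullet> z + y \<bullet> N x z = 0)"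
    define T where "T a b c = (N a b - koszul_connection br a b) \<bullet> c" for a b c
    have "T a b c = T b a c" for a b c
    proof -
      have "N a b - koszul_connection br a b - (N b a - koszul_connection br b a)
          = (N a b - N b a) - (koszul_connection br a b - koszul_connection br b a)"
        by (simp add: algebra_simps)
      also have "\<dots> = 0"
        using N torsion[of a b] by simp
      finally show ?thesis
        by (simp add: T_def)
    qed
    moreover have "T a b c = - T a c b" for a b c
    proof -
      have "N a b \<bullet> c + b \<bullet> N a c = 0"
        using N by blast
      then show ?thesis
        using metric[of a b c] by (simp add: T_def inner_diff_left inner_commute[of b])
    qed
    ultimately have "T a b (N a b - koszul_connection br a b) = 0" for a b
      by (rule sym_skew_eq_0)
    then show "N = koszul_connection br"
      by (auto simp: T_def)
  qed (use torsion metric in blast)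
qed

lemma koszul_connection_self:
  assumes "lie_bracket br"
  shows "koszul_connection br x x = adjoint (br x) x"
  using lie_bracket_self[OF assms] by (simp add: koszul_connection_def flip: scaleR_2)

locale virtual_constraint = complementary_subspaces D F
  for D F :: "'a::euclidean_space set" +
  fixes br :: "'a \<Rightarrow> 'a \<Rightarrow> 'a" and u :: "'a \<Rightarrow> 'a"
  assumes lie: "lie_bracket br"
    and control_in_F: "u x \<in> F"
    and control_law: "sharp (ad_star br x (flat x)) - u x \<in> D"
begin

lemma bilinear_br: "bilinear br"
  using lie unfolding lie_bracket_def by blast

lemma proj_adjoint_self: "proj (adjoint (br x) x) = u x"
  using control_in_F control_law
  by (intro proj_along_eqI) (simp_all add: sharp_ad_star_flat[OF bilinear_br])

lemma nabla_c_self: "nabla_c br D F x x = adjoint (br x) x + koszul_connection br x (proj x) - u x"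
  by (simp add: nabla_c_def nabla_g_eq_koszul_connection[OF lie] koszul_connection_self[OF lie]
      proj_adjoint_self)

lemma has_vector_derivative_proj:
  "(\<xi> has_vector_derivative v) (at t within I) \<Longrightarrow>
    ((\<lambda>s. proj (\<xi> s)) has_vector_derivative proj v) (at t within I)"
  using linear_proj_along
  by (simp add: bounded_linear.has_vector_derivative linear_conv_bounded_linear)

lemma closed_loop_in_D:
  assumes I: "is_interval I" "t\<^sub>0 \<in> I" "\<xi> t\<^sub>0 \<in> D" "t \<in> I"
    and closed_loop: "\<And>t. t \<in> I \<Longrightarrow>
      (\<xi> has_vector_derivative - sharp (ad_star br (\<xi> t) (flat (\<xi> t))) + u (\<xi> t)) (at t within I)"
  shows "\<xi> t \<in> D"
proof -
  have "((\<lambda>s. proj (\<xi> s)) has_vector_derivative 0) (at s within I)" if "s \<in> I" for s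
    using has_vector_derivative_proj[OF closed_loop[OF that]]
    by (simp add: sharp_ad_star_flat[OF bilinear_br] proj.diff proj_adjoint_self proj_along_eq_self
        control_in_F)
  then obtain c where "\<And>s. s \<in> I \<Longrightarrow> proj (\<xi> s) = c"
    using has_vector_derivative_zero_constant[OF is_interval_convex[OF \<open>is_interval I\<close>]] by blast
  then have "proj (\<xi> t) = proj (\<xi> t\<^sub>0)"
    using I by simp
  then show ?thesis
    using \<open>\<xi> t\<^sub>0 \<in> D\<close> proj_along_eq_0_iff[of "\<xi> t"] proj_along_eq_0_iff[of "\<xi> t\<^sub>0"] by simp
qed

lemma closed_loop_constrained_geodesic:
  assumes I: "is_interval I" "t\<^sub>0 \<in> I" "\<xi> t\<^sub>0 \<in> D" "t \<in> I"
    and closed_loop: "\<And>t. t \<in> I \<Longrightarrow>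
      (\<xi> has_vector_derivative - sharp (ad_star br (\<xi> t) (flat (\<xi> t))) + u (\<xi> t)) (at t within I)"
  shows "(\<xi> has_vector_derivative - nabla_c br D F (\<xi> t) (\<xi> t)) (at t within I)"
proof -
  have "proj (\<xi> t) = 0"
    using closed_loop_in_D[OF I closed_loop] by (simp add: proj_along_eq_0_iff)
  then have "nabla_c br D F (\<xi> t) (\<xi> t) = sharp (ad_star br (\<xi> t) (flat (\<xi> t))) - u (\<xi> t)"
    by (simp add: nabla_c_self bilinear_rzero[OF bilinear_koszul_connection[OF bilinear_br]]
        sharp_ad_star_flat[OF bilinear_br])
  then show ?thesis
    using closed_loop[OF \<open>t \<in> I\<close>] by simp
qed

lemma constrained_geodesic_in_D:
  assumes I: "is_interval I" "t\<^sub>0 \<in> I" "\<xi> t\<^sub>0 \<in> D" "t \<in> I"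
    and geodesic: "\<And>t. t \<in> I \<Longrightarrow>
      (\<xi> has_vector_derivative - nabla_c br D F (\<xi> t) (\<xi> t)) (at t within I)"
  shows "\<xi> t \<in> D"
proof -
  let ?h = "\<lambda>x y. - proj (koszul_connection br x y)"
  have "linear (\<lambda>v. - proj v)"
    by (intro linearI) (simp_all add: proj.add proj.scale)
  then have bilinear_h: "bilinear ?h"
    using bilinear_koszul_connection[OF bilinear_br] by (rule bilinear_compose_linear)
  have continuous: "continuous_on I \<xi>"
    unfolding continuous_on_eq_continuous_within
    using has_vector_derivative_continuous[OF geodesic] by blast
  have proj_der: "((\<lambda>s. proj (\<xi> s)) has_vector_derivative ?h (\<xi> s) (proj (\<xi> s))) (at s within I)"
    if "s \<in> I" for s
    using has_vector_derivative_proj[OF geodesic[OF that]]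
    by (simp add: nabla_c_self proj.add proj.diff proj.neg proj_adjoint_self proj_along_eq_self
        control_in_F)
  have "proj (\<xi> t\<^sub>0) = 0"
    using \<open>\<xi> t\<^sub>0 \<in> D\<close> by (simp add: proj_along_eq_0_iff)
  then have "proj (\<xi> t) = 0"
    by (rule bilinear_ode_vanish_on_interval[OF bilinear_h I(1,2,4) _ continuous proj_der])
  then show ?thesis
    by (simp add: proj_along_eq_0_iff)
qed

end

theorem mainTheorem12:
  fixes br :: "'a::euclidean_space \<Rightarrow> 'a \<Rightarrow> 'a"
    and fs :: "nat \<Rightarrow> 'a" and m :: nat
    and D :: "'a set"
    and tau :: "'a \<Rightarrow> nat \<Rightarrow> real"
  assumes lie: "lie_bracket br"
    and fs_inj: "inj_on fs {..<m}"
    and fs_indep: "independent (fs ` {..<m})"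
    and D_sub: "subspace D"
    and D_cap: "D \<inter> span (fs ` {..<m}) = {0}"
    and D_sum: "{x + y | x y. x \<in> D \<and> y \<in> span (fs ` {..<m})} = UNIV"
    and tau_def: "\<And>\<xi>. sharp (ad_star br \<xi> (flat \<xi>)) - (\<Sum>b<m. tau \<xi> b *\<^sub>R fs b) \<in> D"
  shows
    "(\<forall>(I::real set) (\<xi>::real \<Rightarrow> 'a).
        is_interval I \<and> 0 \<in> I \<and> \<xi> 0 \<in> D \<and>
        (\<forall>t\<in>I. (\<xi> has_vector_derivative
                  (- sharp (ad_star br (\<xi> t) (flat (\<xi> t)))
                   + (\<Sum>b<m. tau (\<xi> t) b *\<^sub>R fs b))) (at t within I))
        \<longrightarrow> (\<forall>t\<in>I. (\<xi> has_vector_derivative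
                  (- nabla_c br D (span (fs ` {..<m})) (\<xi> t) (\<xi> t))) (at t within I)))
     \<and>
     (\<forall>(I::real set) (\<xi>::real \<Rightarrow> 'a).
        is_interval I \<and> 0 \<in> I \<and> \<xi> 0 \<in> D \<and>
        (\<forall>t\<in>I. (\<xi> has_vector_derivative
                  (- nabla_c br D (span (fs ` {..<m})) (\<xi> t) (\<xi> t))) (at t within I))
        \<longrightarrow> (\<forall>t\<in>I. \<xi> t \<in> D))"
proof -
  interpret virtual_constraint D "span (fs ` {..<m})" br "\<lambda>x. \<Sum>b<m. tau x b *\<^sub>R fs b"
    by unfold_locales
      (auto simp: lie D_sub D_cap D_sum tau_def intro: span_sum span_scale span_base)
  show ?thesis
    by (intro conjI allI impI ballI; elim conjE)
      ((rule closed_loop_constrained_geodesic[where t\<^sub>0 = 0]; blast),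
       metis constrained_geodesic_in_D[where t\<^sub>0 = 0])
qed

end
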